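(* Let $\mathbf B\in\mathcal B_n$ and let $|G\rangle=Z_{\mathbf B}|+\rangle^{\otimes n}$ be the associated graph state. Then there exist $\mathbf v\in\mathbb F_2^n$, an upper triangular matrix $\mathbf A\in GL_n(\mathbb F_2)$ and a reduced matrix $\mathbf B_{\mathrm{red}}\in\mathcal B_n$ such that $$|G\rangle=Z_{\mathbf v}\,X_{\mathbf A}\,Z_{\mathbf B_{\mathrm{red}}}\,|+\rangle^{\otimes n}.$$
   Context: Qubits are labelled $0,\dots,n-1$; the computational basis of $(\mathbb C^2)^{\otimes n}$ is $\{|x\rangle : x\in\mathbb F_2^n\}$. $|+\rangle=\frac1{\sqrt2}(|0\rangle+|1\rangle)$. For $\mathbf v\in\mathbb F_2^n$, $Z_{\mathbf v}$ is the unitary with $Z_{\mathbf v}|x\rangle=(-1)^{\sum_i v_ix_i}|x\rangle$ (a product of Pauli $Z$ gates). For $\mathbf A\in GL_n(\mathbb F_2)$, $X_{\mathbf A}$ is the unitary with $X_{\mathbf A}|x\rangle=|\mathbf Ax\rangle$ (realizable by CNOT gates). $\mathcal B_n$ is the set of symmetric $n\times n$ matrices over $\mathbb F_2$ with zero diagonal; for $\mathbf B=(b_{ij})\in\mathcal B_n$, $Z_{\mathbf B}|x\rangle=(-1)^{\sum_{i<j}b_{ij}x_ix_j}|x\rangle$ (a product of CZ gates). A matrix $\mathbf B\in\mathcal B_n$ is called reduced if each row and each column of $\mathbf B$ contains at most one non-zero entry. *)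

theory Defs
  imports "HOL-Analysis.Analysis" "HOL-Library.Z2"
begin

text \<open>Qubits are indexed by a finite linearly ordered type 'n (standing for {0,...,n-1}
  with its natural order); F_2 is the field bit; F_2^n is bit ^ 'n.
  An n-qubit state is given by its amplitude function (bit ^ 'n) \<Rightarrow> complex, i.e.
  psi = sum_x psi(x) |x>.\<close>

type_synonym 'n qstate = "(bit ^ 'n) \<Rightarrow> complex"

definition sgn_bit :: "bit \<Rightarrow> complex" where
  "sgn_bit b = (if b = 0 then 1 else -1)"

definition plus_state :: "'n::finite qstate" where
  "plus_state = (\<lambda>x. 1 / (complex_of_real (sqrt 2)) ^ CARD('n))"

definition Zv :: "bit ^ 'n::finite \<Rightarrow> 'n qstate \<Rightarrow> 'n qstate" where
  "Zv v psi = (\<lambda>x. sgn_bit (\<Sum>i\<in>UNIV. v $ i * x $ i) * psi x)"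

text \<open>X_A |x> = |Ax>, i.e. X_A = sum_x |Ax><x|\<close>
definition XA :: "bit ^ 'n ^ 'n \<Rightarrow> 'n::finite qstate \<Rightarrow> 'n qstate" where
  "XA A psi = (\<lambda>y. \<Sum>x\<in>{x. A *v x = y}. psi x)"

definition ZB :: "bit ^ ('n::{finite,linorder}) ^ ('n::{finite,linorder}) \<Rightarrow> ('n::{finite,linorder}) qstate \<Rightarrow> ('n::{finite,linorder}) qstate" where
  "ZB B psi = (\<lambda>x. sgn_bit (\<Sum>(i,j)\<in>{(i,j). i < j}. B $ i $ j * x $ i * x $ j) * psi x)"

definition in_Bn :: "bit ^ 'n ^ 'n \<Rightarrow> bool" where
  "in_Bn B \<longleftrightarrow> transpose B = B \<and> (\<forall>i. B $ i $ i = 0)"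

definition reduced :: "bit ^ 'n ^ 'n \<Rightarrow> bool" where
  "reduced B \<longleftrightarrow> (\<forall>i. card {j. B $ i $ j \<noteq> 0} \<le> 1) \<and> (\<forall>j. card {i. B $ i $ j \<noteq> 0} \<le> 1)"

definition upper_triangular :: "'a::zero ^ ('n::{finite,linorder}) ^ ('n::{finite,linorder}) \<Rightarrow> bool" where
  "upper_triangular A \<longleftrightarrow> (\<forall>i j. j < i \<longrightarrow> A $ i $ j = 0)"

end

theory Submission
  imports Defs
begin

text \<open>Up to normalisation, the amplitude of Z_B |+>^n at x is (-1)^(q_B(x)), where
  q_B(x) = sum_(i<j) b_ij x_i x_j, and X_A acts on amplitudes by the substitution x := A^(-1) x.
  So it suffices to find an invertible upper triangular A and a reduced B_red such that
  q_B(A x) + q_B_red(x) is linear in x; the linear part becomes Z_v.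

  For a < b, the upper triangular transvection x_a := x_a + x_b turns q_B, up to a linear term,
  into the quadratic form of the graph in which the neighbourhood of b is toggled by that of a.
  Greedily, let i be the least vertex that is neither isolated nor already on an isolated edge,
  and j its least neighbour. Transvections from j delete the other neighbours of i, all larger
  than j; then transvections from i delete the other neighbours of j, all larger than i by the
  choice of i. Neither step touches the isolated edges found so far, and i -- j becomes a new one.\<close>

lemma bit_add_self [simp]: "(x::bit) + x = 0"
  by (cases x) auto

declare add_bit_eq_xor [simp del] mult_bit_eq_and [simp del]

lemma bit_add_self_left [simp]: "(x::bit) + (x + y) = y"
  by (simp add: add.assoc[symmetric])

lemma sgn_bit_add: "sgn_bit (p + q) = sgn_bit p * sgn_bit q"
  by (cases p; cases q) (auto simp: sgn_bit_def)

lemma in_Bn_sym: "in_Bn B \<Longrightarrow> B $ i $ j = B $ j $ i"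
  unfolding in_Bn_def by (metis transpose_def vec_lambda_beta)

lemma in_Bn_diag: "in_Bn B \<Longrightarrow> B $ i $ i = 0"
  unfolding in_Bn_def by blast

section \<open>Graph states as quadratic forms\<close>

definition quad_form where
  "quad_form (B :: bit ^ ('n::{finite,linorder}) ^ ('n::{finite,linorder})) x =
     (\<Sum>(i, j)\<in>{(i, j). i < j}. B $ i $ j * x $ i * x $ j)"

lemma ZB_eq_quad_form: "ZB B psi = (\<lambda>x. sgn_bit (quad_form B x) * psi x)"
  by (simp add: ZB_def quad_form_def)

lemma quad_form_cong:
  assumes "\<And>i j. x $ i \<noteq> 0 \<Longrightarrow> x $ j \<noteq> 0 \<Longrightarrow> B $ i $ j = B' $ i $ j"
  shows "quad_form B x = quad_form B' x"
  unfolding quad_form_def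
proof (intro sum.cong refl, clarify)
  fix i j
  show "B $ i $ j * x $ i * x $ j = B' $ i $ j * x $ i * x $ j"
    using assms[of i j] by (cases "x $ i = 0 \<or> x $ j = 0") auto
qed

lemma quad_form_split:
  assumes B: "in_Bn B"
  shows "quad_form B x = x $ a * (\<Sum>k\<in>UNIV. B $ a $ k * x $ k)
           + quad_form B (\<chi> i. if i = a then 0 else x $ i)"
proof -
  define x0 where "x0 = (\<chi> i. if i = a then 0 else x $ i)"
  define P where "P = {(i, j). i < (j::'a)}"
  define Pa where "Pa = {(i, j). i < j \<and> (i = a \<or> j = a)}"
  define f where "f y = (\<lambda>(i, j). B $ i $ j * y $ i * y $ j)" for y
  have split: "quad_form B y = sum (f y) (P - Pa) + sum (f y) Pa" for y
    unfolding quad_form_def f_def P_def Pa_def by (rule sum.subset_diff) auto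
  have "sum (f x0) Pa = 0"
    by (rule sum.neutral) (auto simp: f_def Pa_def x0_def)
  moreover have "sum (f x0) (P - Pa) = sum (f x) (P - Pa)"
    by (rule sum.cong) (auto simp: f_def P_def Pa_def x0_def split: if_splits)
  moreover have "sum (f x) Pa = x $ a * (\<Sum>k\<in>UNIV. B $ a $ k * x $ k)"
  proof -
    define h where "h k = (if a < k then (a, k) else (k, a))" for k
    have "bij_betw h (UNIV - {a}) Pa"
      by (rule bij_betw_imageI) (auto simp: inj_on_def h_def Pa_def image_def split: if_splits)
    then have "sum (f x) Pa = (\<Sum>k\<in>UNIV - {a}. f x (h k))"
      by (rule sum.reindex_bij_betw[symmetric])
    also have "\<dots> = (\<Sum>k\<in>UNIV - {a}. x $ a * (B $ a $ k * x $ k))"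
      by (rule sum.cong) (auto simp: f_def h_def in_Bn_sym[OF B, of a] mult_ac)
    also have "\<dots> = (\<Sum>k\<in>UNIV. x $ a * (B $ a $ k * x $ k))"
      by (rule sum.mono_neutral_left) (auto simp: in_Bn_diag[OF B])
    finally show ?thesis by (simp add: sum_distrib_left)
  qed
  ultimately show ?thesis
    using split[of x] split[of x0] unfolding x0_def by simp
qed

definition linear_functional :: "(bit ^ 'n::finite \<Rightarrow> bit) \<Rightarrow> bool" where
  "linear_functional g \<longleftrightarrow> (\<exists>u. \<forall>x. g x = (\<Sum>i\<in>UNIV. u $ i * x $ i))"

lemma linear_functional_add:
  assumes "linear_functional f" "linear_functional g"
  shows "linear_functional (\<lambda>x. f x + g x)"
proof -
  obtain u w where "\<forall>x. f x = (\<Sum>i\<in>UNIV. u $ i * x $ i)" "\<forall>x. g x = (\<Sum>i\<in>UNIV. w $ i * x $ i)"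
    using assms unfolding linear_functional_def by blast
  then show ?thesis
    unfolding linear_functional_def by (intro exI[of _ "u + w"]) (simp add: distrib_right sum.distrib)
qed

lemma linear_functional_matrix_compose:
  assumes "linear_functional g"
  shows "linear_functional (\<lambda>x. g (A *v x))"
proof -
  obtain u where u: "\<forall>x. g x = (\<Sum>i\<in>UNIV. u $ i * x $ i)"
    using assms unfolding linear_functional_def by blast
  have "g (A *v x) = (\<Sum>j\<in>UNIV. (u v* A) $ j * x $ j)" for x
  proof -
    have "g (A *v x) = (\<Sum>i\<in>UNIV. \<Sum>j\<in>UNIV. u $ i * A $ i $ j * x $ j)"
      by (simp add: u matrix_vector_mult_def sum_distrib_left mult.assoc)
    also have "\<dots> = (\<Sum>j\<in>UNIV. (u v* A) $ j * x $ j)"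
      by (subst sum.swap) (simp add: vector_matrix_mult_def sum_distrib_right)
    finally show ?thesis .
  qed
  then show ?thesis
    unfolding linear_functional_def by blast
qed

lemma upper_triangular_mult:
  fixes A B :: "'a::semiring_1 ^ ('n::{finite,linorder}) ^ ('n::{finite,linorder})"
  assumes "upper_triangular A" "upper_triangular B"
  shows "upper_triangular (A ** B)"
  unfolding upper_triangular_def
proof (intro allI impI)
  fix i j :: 'n
  assume "j < i"
  then have "A $ i $ k * B $ k $ j = 0" for k
    using assms unfolding upper_triangular_def by (cases "k < i") (auto dest: order.strict_trans2)
  then show "(A ** B) $ i $ j = 0"
    by (simp add: matrix_matrix_mult_def)
qed

lemma upper_triangular_mat_1: "upper_triangular (mat 1)"
  unfolding upper_triangular_def mat_def by auto

definition ut_equiv where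
  "ut_equiv (B :: bit ^ ('n::{finite,linorder}) ^ ('n::{finite,linorder})) B' \<longleftrightarrow>
     (\<exists>A. invertible A \<and> upper_triangular A \<and>
          linear_functional (\<lambda>x. quad_form B (A *v x) + quad_form B' x))"

lemma ut_equiv_refl: "ut_equiv B B"
proof -
  have "invertible (mat 1 :: bit ^ 'n ^ 'n)"
    unfolding invertible_def by auto
  moreover have "linear_functional (\<lambda>x. quad_form B (mat 1 *v x) + quad_form B x)"
    unfolding linear_functional_def by (auto intro: exI[of _ 0])
  ultimately show ?thesis
    unfolding ut_equiv_def using upper_triangular_mat_1 by blast
qed

lemma ut_equiv_trans:
  assumes "ut_equiv B1 B2" "ut_equiv B2 B3"
  shows "ut_equiv B1 B3"
proof -
  obtain A1 where A1: "invertible A1" "upper_triangular A1"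
    "linear_functional (\<lambda>x. quad_form B1 (A1 *v x) + quad_form B2 x)"
    using assms(1) unfolding ut_equiv_def by blast
  obtain A2 where A2: "invertible A2" "upper_triangular A2"
    "linear_functional (\<lambda>x. quad_form B2 (A2 *v x) + quad_form B3 x)"
    using assms(2) unfolding ut_equiv_def by blast
  have "linear_functional (\<lambda>x. (quad_form B1 (A1 *v (A2 *v x)) + quad_form B2 (A2 *v x))
                                 + (quad_form B2 (A2 *v x) + quad_form B3 x))"
    using linear_functional_add[OF linear_functional_matrix_compose[OF A1(3)] A2(3)] .
  then have "linear_functional (\<lambda>x. quad_form B1 ((A1 ** A2) *v x) + quad_form B3 x)"
    by (simp add: matrix_vector_mul_assoc add.assoc)
  then show ?thesis
    unfolding ut_equiv_def using invertible_mult[OF A1(1) A2(1)] upper_triangular_mult[OF A1(2) A2(2)]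
    by blast
qed

lemma XA_inverse:
  assumes "A ** A' = mat 1" "A' ** A = mat 1"
  shows "XA A psi = (\<lambda>y. psi (A' *v y))"
proof
  fix y
  have "{x. A *v x = y} = {A' *v y}"
    using assms by (auto simp: matrix_vector_mul_assoc)
  then show "XA A psi y = psi (A' *v y)"
    by (simp add: XA_def)
qed

lemma graph_state_ut_equiv:
  assumes "ut_equiv B B'"
  shows "\<exists>v A. invertible A \<and> upper_triangular A \<and>
           ZB B plus_state = Zv v (XA A (ZB B' plus_state))"
proof -
  obtain A where A: "invertible A" "upper_triangular A"
    and lin: "linear_functional (\<lambda>x. quad_form B (A *v x) + quad_form B' x)"
    using assms unfolding ut_equiv_def by blast
  obtain A' where AA': "A ** A' = mat 1" "A' ** A = mat 1"
    using A(1) unfolding invertible_def by blast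
  obtain v where v: "\<And>y. quad_form B (A *v (A' *v y)) + quad_form B' (A' *v y) = (\<Sum>i\<in>UNIV. v $ i * y $ i)"
    using linear_functional_matrix_compose[OF lin, of A'] unfolding linear_functional_def by blast
  have "quad_form B y + quad_form B' (A' *v y) = (\<Sum>i\<in>UNIV. v $ i * y $ i)" for y
    using v[of y] by (simp add: matrix_vector_mul_assoc AA'(1))
  then have "quad_form B y = (\<Sum>i\<in>UNIV. v $ i * y $ i) + quad_form B' (A' *v y)" for y
    by (metis add.assoc bit_add_self add_0_right)
  then have "ZB B plus_state = Zv v (XA A (ZB B' plus_state))"
    by (simp add: XA_inverse[OF AA'] ZB_eq_quad_form Zv_def sgn_bit_add plus_state_def)
  then show ?thesis
    using A by blast
qed

section \<open>Transvections\<close>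

definition transvection :: "'n \<Rightarrow> 'n \<Rightarrow> bit ^ 'n ^ 'n" where
  "transvection a b = mat 1 + (\<chi> i j. if i = a \<and> j = b then 1 else 0)"

lemma transvection_mult_vector:
  "transvection a b *v x = (\<chi> i. if i = a then x $ a + x $ b else x $ i)"
proof -
  have "(\<chi> i j. if i = a \<and> j = b then 1 else 0) *v x = (\<chi> i. if i = a then x $ b else (0::bit))"
    by (simp add: vec_eq_iff matrix_vector_mult_def if_distrib[of "\<lambda>c. c * _"] cong: if_cong)
  then show ?thesis
    by (simp add: transvection_def matrix_vector_mult_add_rdistrib vec_eq_iff)
qed

lemma transvection_invertible:
  assumes "a \<noteq> b"
  shows "invertible (transvection a b)"
proof -
  have "transvection a b ** transvection a b = mat 1"
    using assms unfolding matrix_eq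
    by (simp add: matrix_vector_mul_assoc[symmetric] transvection_mult_vector vec_eq_iff)
  then show ?thesis
    unfolding invertible_def by blast
qed

lemma transvection_upper_triangular:
  "a < b \<Longrightarrow> upper_triangular (transvection a b)"
  unfolding upper_triangular_def transvection_def by (auto simp: mat_def dest: less_asym)

definition graph_transvection :: "'n \<Rightarrow> 'n \<Rightarrow> bit ^ 'n ^ 'n \<Rightarrow> bit ^ 'n ^ 'n" where
  "graph_transvection a b B = (\<chi> i j. if i = j then 0
     else B $ i $ j + (if i = b then B $ a $ j else 0) + (if j = b then B $ i $ a else 0))"

lemma in_Bn_graph_transvection:
  assumes "in_Bn B"
  shows "in_Bn (graph_transvection a b B)"
  unfolding in_Bn_def
  by (auto simp: vec_eq_iff transpose_def graph_transvection_def in_Bn_sym[OF assms])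

lemma graph_transvection_row:
  assumes "in_Bn B" "i \<noteq> b"
  shows "graph_transvection a b B $ i $ j = B $ i $ j + (if j = b then B $ i $ a else 0)"
  using assms by (auto simp: graph_transvection_def in_Bn_diag)

lemma quad_form_graph_transvection:
  assumes B: "in_Bn B" and "a \<noteq> b"
  shows "quad_form B (transvection a b *v x) + quad_form (graph_transvection a b B) x = B $ a $ b * x $ b"
proof -
  define B' where "B' = graph_transvection a b B"
  define y where "y = transvection a b *v x"
  define s where "s = (\<Sum>k\<in>UNIV. B $ a $ k * x $ k)"
  define xa where "xa = (\<chi> i. if i = a then 0 else x $ i)"
  define xb where "xb = (\<chi> i. if i = b then 0 else x $ i)"
  have y: "y = (\<chi> i. if i = a then x $ a + x $ b else x $ i)"
    unfolding y_def transvection_mult_vector ..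
  have "(\<Sum>k\<in>UNIV. B $ a $ k * y $ k) = s"
    unfolding s_def y by (intro sum.cong refl) (simp add: in_Bn_diag[OF B])
  moreover have "(\<chi> i. if i = a then 0 else y $ i) = xa"
    by (simp add: y xa_def vec_eq_iff)
  ultimately have "quad_form B y = (x $ a + x $ b) * s + quad_form B xa"
    using quad_form_split[OF B, of y a] by (simp add: y)
  moreover have "quad_form B x = x $ a * s + quad_form B xa"
    using quad_form_split[OF B, of x a] by (simp add: s_def xa_def)
  ultimately have qy: "quad_form B y + quad_form B x = x $ b * s"
    by (simp add: distrib_right add_ac)
  have B': "in_Bn B'"
    unfolding B'_def using B by (rule in_Bn_graph_transvection)
  have "B' $ b $ k = B $ b $ k + B $ a $ k + (if k = b then B $ a $ b else 0)" for k
    by (simp add: B'_def graph_transvection_def in_Bn_diag[OF B])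
  then have "(\<Sum>k\<in>UNIV. B' $ b $ k * x $ k) = (\<Sum>k\<in>UNIV. B $ b $ k * x $ k) + s + B $ a $ b * x $ b"
    by (simp add: s_def distrib_right sum.distrib if_distrib[of "\<lambda>c. c * _"] cong: if_cong)
  moreover have "quad_form B' xb = quad_form B xb"
    by (rule quad_form_cong) (auto simp: B'_def graph_transvection_def xb_def in_Bn_diag[OF B])
  ultimately have qB': "quad_form B' x + quad_form B x = x $ b * s + B $ a $ b * x $ b"
    using quad_form_split[OF B', of x b] quad_form_split[OF B, of x b]
    by (cases "x $ b") (simp_all add: xb_def distrib_left add_ac)
  have "quad_form B y + quad_form B' x
          = (quad_form B y + quad_form B x) + (quad_form B' x + quad_form B x)"
    by (simp add: add_ac)
  also have "\<dots> = B $ a $ b * x $ b"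
    unfolding qy qB' by simp
  finally show ?thesis
    unfolding B'_def y_def .
qed

lemma ut_equiv_graph_transvection:
  assumes "in_Bn B" "a < b"
  shows "ut_equiv B (graph_transvection a b B)"
proof -
  have "linear_functional (\<lambda>x. quad_form B (transvection a b *v x) + quad_form (graph_transvection a b B) x)"
    unfolding linear_functional_def
  proof (intro exI allI)
    fix x
    have "(\<Sum>i\<in>UNIV. (\<chi> i. if i = b then B $ a $ b else 0) $ i * x $ i) = B $ a $ b * x $ b"
      by (simp add: if_distrib[of "\<lambda>c. c * _"] cong: if_cong)
    then show "quad_form B (transvection a b *v x) + quad_form (graph_transvection a b B) x
                 = (\<Sum>i\<in>UNIV. (\<chi> i. if i = b then B $ a $ b else 0) $ i * x $ i)"
      using quad_form_graph_transvection[OF assms(1), of a b x] assms(2) by simp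
  qed
  moreover have "invertible (transvection a b)" "upper_triangular (transvection a b)"
    using assms(2) by (simp_all add: transvection_invertible transvection_upper_triangular)
  ultimately show ?thesis
    unfolding ut_equiv_def by blast
qed

section \<open>Splitting off isolated edges\<close>

definition neighbours :: "bit ^ 'n ^ 'n \<Rightarrow> 'n \<Rightarrow> 'n set" where
  "neighbours B i = {j. B $ i $ j \<noteq> 0}"

lemma in_neighbours_iff: "j \<in> neighbours B i \<longleftrightarrow> B $ i $ j = 1"
  by (simp add: neighbours_def)

lemma neighbours_sym: "in_Bn B \<Longrightarrow> j \<in> neighbours B i \<longleftrightarrow> i \<in> neighbours B j"
  by (simp add: in_neighbours_iff in_Bn_sym)

lemma not_in_neighbours_self: "in_Bn B \<Longrightarrow> i \<notin> neighbours B i"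
  by (simp add: in_neighbours_iff in_Bn_diag)

lemma reduced_iff_card_neighbours:
  assumes "in_Bn B"
  shows "reduced B \<longleftrightarrow> (\<forall>i. card (neighbours B i) \<le> 1)"
proof -
  have "{i. B $ i $ j \<noteq> 0} = neighbours B j" for j
    using assms by (auto simp: neighbours_def in_Bn_sym)
  then show ?thesis
    unfolding reduced_def by (simp add: neighbours_def)
qed

lemma graph_transvections_clear_neighbours:
  assumes "in_Bn B" "a \<in> neighbours B c" "K \<subseteq> neighbours B c" "\<forall>k\<in>K. a < k"
  shows "\<exists>B'. ut_equiv B B' \<and> in_Bn B' \<and> neighbours B' c = neighbours B c - K \<and>
           (\<forall>m. m \<notin> K \<longrightarrow> a \<notin> neighbours B m \<longrightarrow> neighbours B' m = neighbours B m)"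
proof -
  have "finite K" by simp
  then show ?thesis
    using assms
  proof (induction K arbitrary: B rule: finite_induct)
    case empty
    then show ?case using ut_equiv_refl by blast
  next
    case (insert k K)
    define B1 where "B1 = graph_transvection a k B"
    have "a < k" using insert.prems(4) by simp
    have B1: "in_Bn B1"
      unfolding B1_def using insert.prems(1) by (rule in_Bn_graph_transvection)
    have "ut_equiv B B1"
      unfolding B1_def using insert.prems(1) \<open>a < k\<close> by (rule ut_equiv_graph_transvection)
    have unchanged: "neighbours B1 m = neighbours B m" if "m \<noteq> k" "a \<notin> neighbours B m" for m
      using that insert.prems(1)
      by (auto simp: B1_def graph_transvection_row in_neighbours_iff split: if_splits)
    have "c \<noteq> k"
      using insert.prems(1,3) not_in_neighbours_self by blast
    then have "neighbours B1 c = neighbours B c - {k}"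
      using insert.prems(1-3)
      by (auto simp: B1_def graph_transvection_row in_neighbours_iff split: if_splits)
    moreover have "a \<noteq> k" using \<open>a < k\<close> by simp
    ultimately obtain B' where B': "ut_equiv B1 B'" "in_Bn B'"
      "neighbours B' c = neighbours B1 c - K"
      "\<forall>m. m \<notin> K \<longrightarrow> a \<notin> neighbours B1 m \<longrightarrow> neighbours B' m = neighbours B1 m"
      using insert.IH[OF B1] insert.hyps(2) insert.prems(2-4) by blast
    have "ut_equiv B B'"
      using \<open>ut_equiv B B1\<close> B'(1) by (rule ut_equiv_trans)
    moreover have "neighbours B' c = neighbours B c - insert k K"
      using B'(3) \<open>neighbours B1 c = neighbours B c - {k}\<close> by auto
    moreover have "neighbours B' m = neighbours B m" if "m \<notin> insert k K" "a \<notin> neighbours B m" for m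
      using that unchanged B'(4) by auto
    ultimately show ?case
      using B'(2) by blast
  qed
qed

definition isolated_edges :: "bit ^ 'n ^ 'n \<Rightarrow> 'n set \<Rightarrow> bool" where
  "isolated_edges B M \<longleftrightarrow> (\<forall>m\<in>M. \<exists>p\<in>M. neighbours B m = {p})"

lemma isolated_edges_disjoint_neighbours:
  assumes "in_Bn B" "isolated_edges B M" "s \<notin> M"
  shows "neighbours B s \<inter> M = {}"
  using assms unfolding isolated_edges_def by (force simp: neighbours_sym[OF assms(1), of _ s])

lemma graph_transvections_isolate_edge:
  assumes B: "in_Bn B" and ij: "j \<in> neighbours B i"
    and j_less: "\<forall>k\<in>neighbours B i - {j}. j < k" and i_less: "\<forall>k\<in>neighbours B j - {i}. i < k"
  shows "\<exists>B'. ut_equiv B B' \<and> in_Bn B' \<and> neighbours B' i = {j} \<and> neighbours B' j = {i} \<and>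
           (\<forall>m. m \<notin> neighbours B i \<union> neighbours B j \<longrightarrow> neighbours B' m = neighbours B m)"
proof -
  have ji: "i \<in> neighbours B j"
    using ij neighbours_sym[OF B] by blast
  obtain B1 where B1: "ut_equiv B B1" "in_Bn B1"
      "neighbours B1 i = neighbours B i - (neighbours B i - {j})"
    and keep1: "\<forall>m. m \<notin> neighbours B i - {j} \<longrightarrow> j \<notin> neighbours B m \<longrightarrow>
                  neighbours B1 m = neighbours B m"
    using graph_transvections_clear_neighbours[OF B ij Diff_subset j_less] by blast
  have n1j: "neighbours B1 j = neighbours B j"
    using keep1 not_in_neighbours_self[OF B, of j] by blast
  obtain B2 where B2: "ut_equiv B1 B2" "in_Bn B2"
      "neighbours B2 j = neighbours B1 j - (neighbours B j - {i})"
    and keep2: "\<forall>m. m \<notin> neighbours B j - {i} \<longrightarrow> i \<notin> neighbours B1 m \<longrightarrow>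
                  neighbours B2 m = neighbours B1 m"
    using graph_transvections_clear_neighbours[OF B1(2), of i j "neighbours B j - {i}"] ji n1j i_less
    by auto
  have "neighbours B2 i = {j}"
    using keep2 B1(3) ij not_in_neighbours_self[OF B1(2), of i] by blast
  moreover have "neighbours B2 j = {i}"
    using B2(3) n1j ji by blast
  moreover have "neighbours B2 m = neighbours B m" if "m \<notin> neighbours B i \<union> neighbours B j" for m
    using that keep1 keep2 neighbours_sym[OF B, of m i] neighbours_sym[OF B, of m j] by auto
  ultimately show ?thesis
    using ut_equiv_trans[OF B1(1) B2(1)] B2(2) by blast
qed

lemma isolated_edges_extend:
  assumes B: "in_Bn B" and M: "isolated_edges B M" and "i \<notin> M" "neighbours B i \<noteq> {}"
    and i_min: "\<And>s. s \<notin> M \<Longrightarrow> neighbours B s \<noteq> {} \<Longrightarrow> i \<le> s"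
  shows "\<exists>B' j. ut_equiv B B' \<and> in_Bn B' \<and> isolated_edges B' (insert i (insert j M))"
proof -
  define j where "j = Min (neighbours B i)"
  have j: "j \<in> neighbours B i"
    unfolding j_def using \<open>neighbours B i \<noteq> {}\<close> by (intro Min_in) auto
  have j_min: "j \<le> k" if "k \<in> neighbours B i" for k
    unfolding j_def using that by (intro Min_le) auto
  have outside: "neighbours B s \<inter> M = {}" if "s \<notin> M" for s
    using B M that by (rule isolated_edges_disjoint_neighbours)
  have "j \<notin> M"
    using outside[OF \<open>i \<notin> M\<close>] j by blast
  have "\<forall>k\<in>neighbours B i - {j}. j < k"
    using j_min by (fastforce simp: less_le)
  moreover have "\<forall>k\<in>neighbours B j - {i}. i < k"
  proof
    fix k
    assume k: "k \<in> neighbours B j - {i}"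
    have "k \<notin> M" using k outside[OF \<open>j \<notin> M\<close>] by blast
    moreover have "j \<in> neighbours B k" using k neighbours_sym[OF B] by blast
    ultimately have "i \<le> k" using i_min by blast
    then show "i < k" using k by (auto simp: le_less)
  qed
  ultimately obtain B' where B': "ut_equiv B B'" "in_Bn B'" "neighbours B' i = {j}" "neighbours B' j = {i}"
    and keep: "\<forall>m. m \<notin> neighbours B i \<union> neighbours B j \<longrightarrow> neighbours B' m = neighbours B m"
    using graph_transvections_isolate_edge[OF B j] by blast
  have "neighbours B' m = neighbours B m" if "m \<in> M" for m
    using keep that outside[OF \<open>i \<notin> M\<close>] outside[OF \<open>j \<notin> M\<close>] by blast
  then have "isolated_edges B' (insert i (insert j M))"
    using M B'(3,4) unfolding isolated_edges_def by auto
  then show ?thesis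
    using B'(1,2) by blast
qed

lemma isolated_edges_ut_equiv_reduced:
  assumes "in_Bn B" "isolated_edges B M"
  shows "\<exists>B'. ut_equiv B B' \<and> in_Bn B' \<and> reduced B'"
  using assms
proof (induction "card (- M)" arbitrary: B M rule: less_induct)
  case less
  let ?S = "{s. s \<notin> M \<and> neighbours B s \<noteq> {}}"
  show ?case
  proof (cases "?S = {}")
    case True
    have "card (neighbours B s) \<le> 1" for s
      using True less.prems(2) unfolding isolated_edges_def by (cases "s \<in> M") auto
    then have "reduced B"
      using reduced_iff_card_neighbours[OF less.prems(1)] by blast
    then show ?thesis
      using less.prems(1) ut_equiv_refl by blast
  next
    case False
    define i where "i = Min ?S"
    have "i \<in> ?S"
      unfolding i_def using False by (intro Min_in) auto
    moreover have "i \<le> s" if "s \<notin> M" "neighbours B s \<noteq> {}" for s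
      unfolding i_def using that by (intro Min_le) auto
    ultimately obtain B1 j where B1: "ut_equiv B B1" "in_Bn B1" "isolated_edges B1 (insert i (insert j M))"
      using isolated_edges_extend[OF less.prems] by blast
    have "card (- insert i (insert j M)) < card (- M)"
      using \<open>i \<in> ?S\<close> by (intro psubset_card_mono) auto
    then obtain B' where "ut_equiv B1 B'" "in_Bn B'" "reduced B'"
      using less.hyps B1(2,3) by blast
    then show ?thesis
      using ut_equiv_trans[OF B1(1)] by blast
  qed
qed

lemma ut_equiv_reduced_exists:
  assumes "in_Bn B"
  shows "\<exists>B'. ut_equiv B B' \<and> in_Bn B' \<and> reduced B'"
  using assms isolated_edges_ut_equiv_reduced[of B "{}"] by (simp add: isolated_edges_def)

theorem theorem5p2:
  fixes B :: "bit ^ ('n::{finite,linorder}) ^ ('n::{finite,linorder})"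
  assumes "in_Bn B"
  shows "\<exists>(v :: bit ^ ('n::{finite,linorder}))
           (A :: bit ^ ('n::{finite,linorder}) ^ ('n::{finite,linorder}))
           (Bred :: bit ^ ('n::{finite,linorder}) ^ ('n::{finite,linorder})).
           invertible A \<and> upper_triangular A \<and> in_Bn Bred \<and> reduced Bred \<and>
           ZB B plus_state = Zv v (XA A (ZB Bred plus_state))"
proof -
  obtain Bred where "ut_equiv B Bred" "in_Bn Bred" "reduced Bred"
    using ut_equiv_reduced_exists[OF assms] by blast
  then show ?thesis
    using graph_state_ut_equiv by blast
qed

end
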